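(* Let $F,W,r,\sigma_0^2,\eta,P_c,P_{\max}>0$ and $\alpha>0$. Consider the problem \[ \min_{P_t}\ \frac{F}{W\log_2\!\left(1+\frac{P_t r^{-\alpha}}{\sigma_0^2}\right)}\left(\frac{1}{\eta}P_t+P_c\right)\quad\text{s.t.}\quad 0<P_t\le P_{\max}. \] Denote $y=1+P_t\frac{r^{-\alpha}}{\sigma_0^2}$, $y_0=1+P_{\max}\frac{r^{-\alpha}}{\sigma_0^2}$, and $\varepsilon=\frac{r^{-\alpha}\eta P_c}{\sigma_0^2}-1$. If $\left(\frac{y_0}{e}\right)^{y_0}<2^{\varepsilon/\ln 2}$, then the optimal solution is $P_t^*=P_{\max}$. Otherwise, the optimal solution $P_t^*$ satisfies $\left(\frac{y}{e}\right)^{y}=2^{\varepsilon/\ln 2}$ with $y=1+P_t^*\frac{r^{-\alpha}}{\sigma_0^2}$.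
   Context: Interpretation: the objective is the (approximate) energy consumed by a D2D transmitter to send a file of $F$ bits over a link of distance $r$ with bandwidth $W$, path-loss exponent $\alpha$, noise-plus-interference variance $\sigma_0^2$, power amplifier efficiency $\eta$, circuit power $P_c$, and transmit power $P_t$ bounded by $P_{\max}$. *)

theory Defs
  imports Complex_Main
begin

definition d2d_energy :: "real \<Rightarrow> real \<Rightarrow> real \<Rightarrow> real \<Rightarrow> real \<Rightarrow> real \<Rightarrow> real \<Rightarrow> real \<Rightarrow> real" where
  "d2d_energy F W r \<alpha> \<sigma>0sq \<eta> Pc Pt =
     F / (W * log 2 (1 + Pt * r powr (-\<alpha>) / \<sigma>0sq)) * (Pt / \<eta> + Pc)"

definition d2d_optimal :: "real \<Rightarrow> real \<Rightarrow> real \<Rightarrow> real \<Rightarrow> real \<Rightarrow> real \<Rightarrow> real \<Rightarrow> real \<Rightarrow> real \<Rightarrow> bool" where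
  "d2d_optimal F W r \<alpha> \<sigma>0sq \<eta> Pc Pmax Pt \<longleftrightarrow>
     0 < Pt \<and> Pt \<le> Pmax \<and>
     (\<forall>Q. 0 < Q \<and> Q \<le> Pmax \<longrightarrow>
        d2d_energy F W r \<alpha> \<sigma>0sq \<eta> Pc Pt \<le> d2d_energy F W r \<alpha> \<sigma>0sq \<eta> Pc Q)"

end

theory Submission imports Defs begin

text \<open>With \<open>y = 1 + P\<^sub>t r\<^sup>-\<^sup>\<alpha> / \<sigma>\<^sub>0\<^sup>2\<close> the energy is a positive multiple of
  \<open>g(y) = (y + \<epsilon>) / ln y\<close>, and \<open>g'(y)\<close> has the sign of \<open>\<phi>(y) - \<epsilon>\<close> with \<open>\<phi>(y) = y (ln y - 1)\<close>.
  Since \<open>\<phi>\<close> increases strictly on \<open>[1, \<infinity>)\<close> from \<open>\<phi>(1) = -1 < \<epsilon>\<close>, \<open>g\<close> decreases up to the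
  root of \<open>\<phi> = \<epsilon>\<close> and increases afterwards. On the feasible range \<open>(1, y\<^sub>0]\<close> the unique minimiser
  is therefore \<open>y\<^sub>0\<close> if \<open>\<phi>(y\<^sub>0) < \<epsilon>\<close>, and the root otherwise. The stated condition is
  \<open>exp \<phi>(y\<^sub>0) < exp \<epsilon>\<close>.\<close>

lemma x_ln_x_minus_x_less:
  fixes a b :: real
  assumes "1 \<le> a" "a < b"
  shows "a * (ln a - 1) < b * (ln b - 1)"
proof (rule DERIV_pos_imp_increasing_open[OF assms(2)])
  fix x assume "a < x" "x < b"
  then have "((\<lambda>x. x * (ln x - 1)) has_real_derivative ln x) (at x)" "ln x > 0"
    using assms(1) by (auto intro!: derivative_eq_intros)
  then show "\<exists>y. ((\<lambda>x. x * (ln x - 1)) has_real_derivative y) (at x) \<and> y > 0"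
    by blast
qed (use assms in \<open>auto intro!: continuous_intros\<close>)

lemma has_real_derivative_ln_ratio:
  fixes e x :: real
  assumes "x > 1"
  shows "((\<lambda>x. (x + e) / ln x) has_real_derivative
           (x * (ln x - 1) - e) / (x * (ln x)\<^sup>2)) (at x)"
  using assms
  by (auto intro!: derivative_eq_intros simp: power2_eq_square field_simps)

lemma ln_ratio_decreasing:
  fixes a b e :: real
  assumes "1 < a" "a < b" "b * (ln b - 1) \<le> e"
  shows "(b + e) / ln b < (a + e) / ln a"
proof (rule DERIV_neg_imp_decreasing_open[OF assms(2)])
  fix x assume x: "a < x" "x < b"
  have "x * (ln x - 1) < e"
    using x_ln_x_minus_x_less[of x b] x assms by linarith
  then have "(x * (ln x - 1) - e) / (x * (ln x)\<^sup>2) < 0"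
    using x assms(1) by (intro divide_neg_pos) auto
  then show "\<exists>y. ((\<lambda>x. (x + e) / ln x) has_real_derivative y) (at x) \<and> y < 0"
    using has_real_derivative_ln_ratio[of x e] x assms(1) by force
qed (use assms in \<open>auto intro!: continuous_intros\<close>)

lemma ln_ratio_increasing:
  fixes a b e :: real
  assumes "1 < a" "a < b" "e \<le> a * (ln a - 1)"
  shows "(a + e) / ln a < (b + e) / ln b"
proof (rule DERIV_pos_imp_increasing_open[OF assms(2)])
  fix x assume x: "a < x" "x < b"
  have "e < x * (ln x - 1)"
    using x_ln_x_minus_x_less[of a x] x assms by linarith
  then have "(x * (ln x - 1) - e) / (x * (ln x)\<^sup>2) > 0"
    using x assms(1) by (intro divide_pos_pos) auto
  then show "\<exists>y. ((\<lambda>x. (x + e) / ln x) has_real_derivative y) (at x) \<and> y > 0"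
    using has_real_derivative_ln_ratio[of x e] x assms(1) by force
qed (use assms in \<open>auto intro!: continuous_intros\<close>)

lemma ln_ratio_strict_min:
  fixes e m y :: real
  assumes "1 < m" "1 < y" "y \<noteq> m"
    and "y < m \<Longrightarrow> m * (ln m - 1) \<le> e" and "m < y \<Longrightarrow> e \<le> m * (ln m - 1)"
  shows "(m + e) / ln m < (y + e) / ln y"
  using assms ln_ratio_decreasing[of y m e] ln_ratio_increasing[of m y e]
  by (cases "y < m") auto

lemma x_ln_x_minus_x_root:
  fixes b e :: real
  assumes "-1 < e" "e \<le> b * (ln b - 1)" "1 \<le> b"
  obtains y where "1 < y" "y \<le> b" "y * (ln y - 1) = e"
proof -
  have "\<exists>y. 1 \<le> y \<and> y \<le> b \<and> y * (ln y - 1) = e"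
    by (rule IVT) (use assms in \<open>auto intro!: continuous_intros\<close>)
  then obtain y where "1 \<le> y" "y \<le> b" "y * (ln y - 1) = e" by blast
  moreover from this have "y \<noteq> 1" using assms(1) by auto
  ultimately show thesis by (intro that) auto
qed

lemma powr_div_exp_self:
  fixes y :: real
  assumes "y > 0"
  shows "(y / exp 1) powr y = exp (y * (ln y - 1))"
  using assms by (simp add: powr_def ln_div algebra_simps)

lemma two_powr_div_ln2: "2 powr (e / ln 2) = exp (e :: real)"
  by (simp add: powr_def)

lemma d2d_energy_eq_ln_ratio:
  fixes F W r \<alpha> \<sigma>0sq \<eta> Pc Q :: real
  assumes "W > 0" "r > 0" "\<sigma>0sq > 0" "\<eta> > 0"
  defines "c \<equiv> r powr (-\<alpha>) / \<sigma>0sq"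
  shows "d2d_energy F W r \<alpha> \<sigma>0sq \<eta> Pc Q =
           F * ln 2 / (W * c * \<eta>) * ((1 + Q * c) + (c * \<eta> * Pc - 1)) / ln (1 + Q * c)"
proof (cases "ln (1 + Q * c) = 0")
  case True
  then show ?thesis by (simp add: d2d_energy_def log_def c_def)
next
  case False
  have "c > 0" using assms by (simp add: c_def)
  with False assms show ?thesis by (simp add: d2d_energy_def log_def c_def field_simps)
qed

text \<open>The optimisation variable enters only through \<open>y = 1 + Q c\<close>, an increasing bijection
  from \<open>(0, P\<^sub>m\<^sub>a\<^sub>x]\<close> onto \<open>(1, y\<^sub>0]\<close>, so a strict minimiser of the ratio in \<open>y\<close> is the
  unique optimal power.\<close>

lemma d2d_optimal_iff_ln_ratio_min:
  fixes F W r \<alpha> \<sigma>0sq \<eta> Pc Pmax m :: real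
  assumes "F > 0" "W > 0" "r > 0" "\<sigma>0sq > 0" "\<eta> > 0"
  defines "c \<equiv> r powr (-\<alpha>) / \<sigma>0sq"
  defines "\<epsilon> \<equiv> c * \<eta> * Pc - 1"
  assumes "1 < m" "m \<le> 1 + Pmax * c"
    and min: "\<And>y. 1 < y \<Longrightarrow> y \<le> 1 + Pmax * c \<Longrightarrow> y \<noteq> m \<Longrightarrow>
                (m + \<epsilon>) / ln m < (y + \<epsilon>) / ln y"
  shows "d2d_optimal F W r \<alpha> \<sigma>0sq \<eta> Pc Pmax Pt \<longleftrightarrow> 1 + Pt * c = m"
proof -
  have c: "c > 0" using assms by (simp add: c_def)
  define K where "K = F * ln 2 / (W * c * \<eta>)"
  have "K > 0" using assms c by (simp add: K_def)
  have energy: "d2d_energy F W r \<alpha> \<sigma>0sq \<eta> Pc Q = K * ((1 + Q * c + \<epsilon>) / ln (1 + Q * c))" for Q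
    using d2d_energy_eq_ln_ratio[OF assms(2-5), of F \<alpha> Pc Q]
    by (simp add: K_def c_def \<epsilon>_def)
  define P where "P = (m - 1) / c"
  have P: "1 + P * c = m" "0 < P" "P \<le> Pmax"
    using c \<open>1 < m\<close> \<open>m \<le> 1 + Pmax * c\<close> by (auto simp: P_def field_simps)
  have less: "d2d_energy F W r \<alpha> \<sigma>0sq \<eta> Pc P < d2d_energy F W r \<alpha> \<sigma>0sq \<eta> Pc Q"
    if "0 < Q" "Q \<le> Pmax" "1 + Q * c \<noteq> m" for Q
    unfolding energy using mult_strict_left_mono[OF min[of "1 + Q * c"] \<open>K > 0\<close>] that c P(1)
    by simp
  show ?thesis
  proof
    assume opt: "d2d_optimal F W r \<alpha> \<sigma>0sq \<eta> Pc Pmax Pt"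
    show "1 + Pt * c = m"
      using opt less[of Pt] P unfolding d2d_optimal_def by force
  next
    assume "1 + Pt * c = m"
    then have "Pt = P" using c by (auto simp: P_def field_simps)
    moreover have "d2d_energy F W r \<alpha> \<sigma>0sq \<eta> Pc P \<le> d2d_energy F W r \<alpha> \<sigma>0sq \<eta> Pc Q"
      if "0 < Q" "Q \<le> Pmax" for Q
    proof (cases "1 + Q * c = m")
      case True
      then have "Q = P" using c by (auto simp: P_def field_simps)
      then show ?thesis by simp
    qed (use less that in \<open>auto intro: less_imp_le\<close>)
    ultimately show "d2d_optimal F W r \<alpha> \<sigma>0sq \<eta> Pc Pmax Pt"
      using P unfolding d2d_optimal_def by blast
  qed
qed

theorem proposition2:
  fixes F W r \<alpha> \<sigma>0sq \<eta> Pc Pmax :: real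
  assumes "F > 0" "W > 0" "r > 0" "\<sigma>0sq > 0" "\<eta> > 0" "Pc > 0" "Pmax > 0" "\<alpha> > 0"
  defines "y0 \<equiv> 1 + Pmax * r powr (-\<alpha>) / \<sigma>0sq"
      and "\<epsilon> \<equiv> r powr (-\<alpha>) * \<eta> * Pc / \<sigma>0sq - 1"
  shows "((y0 / exp 1) powr y0 < 2 powr (\<epsilon> / ln 2) \<longrightarrow>
            (\<forall>Pt. d2d_optimal F W r \<alpha> \<sigma>0sq \<eta> Pc Pmax Pt \<longleftrightarrow> Pt = Pmax))
       \<and> (\<not> (y0 / exp 1) powr y0 < 2 powr (\<epsilon> / ln 2) \<longrightarrow>
            (\<exists>Pt. d2d_optimal F W r \<alpha> \<sigma>0sq \<eta> Pc Pmax Pt) \<and>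
            (\<forall>Pt. d2d_optimal F W r \<alpha> \<sigma>0sq \<eta> Pc Pmax Pt \<longrightarrow>
               (let y = 1 + Pt * r powr (-\<alpha>) / \<sigma>0sq
                in (y / exp 1) powr y = 2 powr (\<epsilon> / ln 2))))"
proof -
  define c where "c = r powr (-\<alpha>) / \<sigma>0sq"
  have c: "c > 0" using assms by (simp add: c_def)
  have y0_c: "y0 = 1 + Pmax * c" and \<epsilon>_c: "\<epsilon> = c * \<eta> * Pc - 1"
    by (simp_all add: y0_def \<epsilon>_def c_def)
  have "y0 > 1" "\<epsilon> > -1" using c assms(5-7) by (simp_all add: y0_c \<epsilon>_c)
  note optimal_iff = d2d_optimal_iff_ln_ratio_min[OF assms(1-5),
      where \<alpha> = \<alpha> and Pc = Pc and Pmax = Pmax, folded c_def, folded \<epsilon>_c y0_c]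
  have cond: "(y0 / exp 1) powr y0 < 2 powr (\<epsilon> / ln 2) \<longleftrightarrow> y0 * (ln y0 - 1) < \<epsilon>"
    using \<open>y0 > 1\<close> by (simp add: powr_div_exp_self two_powr_div_ln2)
  have at_boundary: "d2d_optimal F W r \<alpha> \<sigma>0sq \<eta> Pc Pmax Pt \<longleftrightarrow> Pt = Pmax"
    if "y0 * (ln y0 - 1) < \<epsilon>" for Pt
    using optimal_iff[OF \<open>y0 > 1\<close> order_refl ln_ratio_strict_min] that \<open>y0 > 1\<close> c
    by (simp add: y0_c field_simps)
  have interior: "(\<exists>Pt. d2d_optimal F W r \<alpha> \<sigma>0sq \<eta> Pc Pmax Pt) \<and>
            (\<forall>Pt. d2d_optimal F W r \<alpha> \<sigma>0sq \<eta> Pc Pmax Pt \<longrightarrow>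
               (let y = 1 + Pt * r powr (-\<alpha>) / \<sigma>0sq in (y / exp 1) powr y = 2 powr (\<epsilon> / ln 2)))"
    if not_boundary: "\<not> y0 * (ln y0 - 1) < \<epsilon>"
  proof -
    obtain ys where "ys > 1" "ys \<le> y0" and root: "ys * (ln ys - 1) = \<epsilon>"
      by (rule x_ln_x_minus_x_root[of \<epsilon> y0]) (use not_boundary \<open>\<epsilon> > -1\<close> \<open>y0 > 1\<close> in auto)
    have ys_optimal_iff: "d2d_optimal F W r \<alpha> \<sigma>0sq \<eta> Pc Pmax Pt \<longleftrightarrow> 1 + Pt * c = ys" for Pt
      using optimal_iff[OF \<open>ys > 1\<close> \<open>ys \<le> y0\<close> ln_ratio_strict_min] \<open>ys > 1\<close> root by simp
    have ys_cond: "(ys / exp 1) powr ys = 2 powr (\<epsilon> / ln 2)"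
      using \<open>ys > 1\<close> root by (simp add: powr_div_exp_self two_powr_div_ln2)
    show ?thesis
    proof (intro conjI exI allI impI)
      show "d2d_optimal F W r \<alpha> \<sigma>0sq \<eta> Pc Pmax ((ys - 1) / c)"
        using ys_optimal_iff c by simp
    next
      fix Pt assume "d2d_optimal F W r \<alpha> \<sigma>0sq \<eta> Pc Pmax Pt"
      then have "1 + Pt * c = ys" using ys_optimal_iff by blast
      then show "let y = 1 + Pt * r powr (-\<alpha>) / \<sigma>0sq in (y / exp 1) powr y = 2 powr (\<epsilon> / ln 2)"
        using ys_cond by (simp add: c_def Let_def)
    qed
  qed
  show ?thesis using cond at_boundary interior by blast
qed

end
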